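(* Consider binary classification of real data points $x \in \mathbb{R}$ drawn from a linearly separable data distribution $p_d$, where the class with label $y=-1$ has class-conditional mean $\mu_1$ and the class with label $y=+1$ has class-conditional mean $\mu_2$, with $\mu_1<\mu_2$, and let $\omega^\star = \frac{\mu_1+\mu_2}{2}$ be the max-margin decision boundary. Run UDP as follows, starting from some $\omega_0 \in \mathbb{R}$ with a fixed step size $\eta \in (0,1)$. At iteration $n$, given the current boundary $\omega_n$: sample $x_n^{(1)} \sim p_d(x \mid y=-1)$ and $x_n^{(2)} \sim p_d(x\mid y=+1)$; form the uncertainty-driven perturbations $\tilde x_n^{(1)} = \beta_n x_n^{(1)} + (1-\beta_n)\omega_n$ and $\tilde x_n^{(2)} = \gamma_n x_n^{(2)} + (1-\gamma_n)\omega_n$, where $\beta_n,\gamma_n \in (0,1)$ are random with $\mathbb{E}[\beta_n]=\mathbb{E}[\gamma_n]=\tfrac12$; an oracle returns $\tilde\omega_n = \alpha_n \tilde x_n^{(1)} + (1-\alpha_n)\tilde x_n^{(2)}$ with $\alpha_n \sim \mathcal{U}(0,1)$ (so $\mathbb{E}[\alpha_n]=\tfrac12$), where $\alpha_n,\beta_n,\gamma_n,x_n^{(1)},x_n^{(2)}$ are mutually independent and independent of $\omega_n$; and update $\omega_{n+1} = \omega_n + \eta(\tilde\omega_n - \omega_n)$. Then, in expectation, the iterate moves towards the max-margin boundary: $\mathbb{E}[\omega_{n+1}\mid\omega_n]$ lies on the segment between $\omega_n$ and $\omega^\star$.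
   Context: UDP (uncertainty-driven perturbations) perturbs each training point by moving it toward the current decision boundary, which is where the model's uncertainty is maximal; in this one-dimensional model the perturbed point is a random convex combination of the original point and the current boundary $\omega_n$. The "oracle" is a weak abstraction of the optimizer: given two (perturbed) data points of opposite classes, it returns a point lying between them, chosen uniformly at random on the segment. *)

theory Defs
  imports "HOL-Probability.Probability"
begin

definition udp_step :: "real \<Rightarrow> real \<Rightarrow> real \<Rightarrow> real \<Rightarrow> real \<Rightarrow> real \<Rightarrow> real \<Rightarrow> real" where
  "udp_step w eta a b c x1 x2 =
     (let xt1 = b * x1 + (1 - b) * w;
          xt2 = c * x2 + (1 - c) * w;
          wt  = a * xt1 + (1 - a) * xt2
      in w + eta * (wt - w))"

end

theory Submission
  imports Defs
begin

text \<open>Centred at the current boundary w, the update reads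
  w + \<eta> (\<alpha> \<beta> (x1 - w) + (1 - \<alpha>) \<gamma> (x2 - w)). By independence each of the two products has
  expectation equal to the product of the means, i.e. (\<mu>1 - w)/4 and (\<mu>2 - w)/4, so the expected
  update is w + (\<eta>/2)((\<mu>1 + \<mu>2)/2 - w), a point of the segment because 0 < \<eta>/2 < 1.\<close>

lemma (in prob_space) uniform_unit_interval_distributed:
  fixes X :: "'a \<Rightarrow> real"
  assumes "distributed M lborel X (\<lambda>x. indicator {0<..<1} x)"
  shows "integrable M X" and "expectation X = 1/2"
proof -
  have "AE x::real in lborel.
      indicator {0<..<1} x = ennreal (indicator {0..1} x / measure lborel {0..1::real})"
    using AE_lborel_singleton[of 0] AE_lborel_singleton[of 1]
    by eventually_elim (auto simp: indicator_def)
  with assms have D: "distributed M lborel X (\<lambda>x. indicator {0..1} x / measure lborel {0..1::real})"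
    by (subst (asm) distributed_cong_density) auto
  have "integrable lborel (\<lambda>x::real. x * indicator {0..1} x)"
    by (intro borel_integrable_atLeastAtMost) simp
  with D show "integrable M X"
    by (intro distributed_integrable_var[of M X "\<lambda>x. indicator {0..1} x / measure lborel {0..1::real}"])
       (auto simp: mult.commute)
  from D show "expectation X = 1/2"
    using uniform_distributed_expectation by fastforce
qed

lemma (in prob_space) indep_vars_lebesgue_integral_mult3:
  fixes X :: "'i \<Rightarrow> 'a \<Rightarrow> real" and f g h :: "real \<Rightarrow> real"
  assumes indep: "indep_vars (\<lambda>_. borel) X I" and sub: "{i, j, k} \<subseteq> I" and "distinct [i, j, k]"
    and [measurable]: "f \<in> borel_measurable borel" "g \<in> borel_measurable borel"
      "h \<in> borel_measurable borel"
    and "integrable M (\<lambda>s. f (X i s))" "integrable M (\<lambda>s. g (X j s))" "integrable M (\<lambda>s. h (X k s))"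
  shows "integrable M (\<lambda>s. f (X i s) * g (X j s) * h (X k s))"
    and "expectation (\<lambda>s. f (X i s) * g (X j s) * h (X k s)) =
      expectation (\<lambda>s. f (X i s)) * expectation (\<lambda>s. g (X j s)) * expectation (\<lambda>s. h (X k s))"
proof -
  define F where "F l = (if l = i then f else if l = j then g else h)" for l
  have F: "F i = f" "F j = g" "F k = h"
    using \<open>distinct [i, j, k]\<close> by (auto simp: F_def)
  have "indep_vars (\<lambda>_. borel) (\<lambda>l s. F l (X l s)) {i, j, k}"
    by (rule indep_vars_compose2[OF indep_vars_subset[OF indep sub]]) (simp add: F_def)
  moreover have "integrable M (\<lambda>s. F l (X l s))" if "l \<in> {i, j, k}" for l
    using that assms by (auto simp: F_def)
  ultimately have "integrable M (\<lambda>s. \<Prod>l\<in>{i, j, k}. F l (X l s))"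
    and "expectation (\<lambda>s. \<Prod>l\<in>{i, j, k}. F l (X l s)) =
      (\<Prod>l\<in>{i, j, k}. expectation (\<lambda>s. F l (X l s)))"
    by (auto intro!: indep_vars_integrable indep_vars_lebesgue_integral)
  then show "integrable M (\<lambda>s. f (X i s) * g (X j s) * h (X k s))"
    and "expectation (\<lambda>s. f (X i s) * g (X j s) * h (X k s)) =
      expectation (\<lambda>s. f (X i s)) * expectation (\<lambda>s. g (X j s)) * expectation (\<lambda>s. h (X k s))"
    using \<open>distinct [i, j, k]\<close> by (simp_all add: F mult.assoc)
qed

lemma udp_step_eq:
  "udp_step w \<eta> a b c x1 x2 = w + \<eta> * (a * b * (x1 - w) + (1 - a) * c * (x2 - w))"
  by (simp add: udp_step_def Let_def algebra_simps)

lemma (in prob_space) expectation_udp_step: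
  fixes \<alpha> \<beta> \<gamma> X1 X2 :: "'a \<Rightarrow> real"
  assumes indep: "indep_vars (\<lambda>_. borel) (\<lambda>i. [\<alpha>, \<beta>, \<gamma>, X1, X2] ! i) {0..<5}"
    and integrable: "integrable M \<alpha>" "integrable M \<beta>" "integrable M \<gamma>"
      "integrable M X1" "integrable M X2"
  shows "expectation (\<lambda>s. udp_step w \<eta> (\<alpha> s) (\<beta> s) (\<gamma> s) (X1 s) (X2 s)) =
    w + \<eta> * (expectation \<alpha> * expectation \<beta> * (expectation X1 - w)
             + (1 - expectation \<alpha>) * expectation \<gamma> * (expectation X2 - w))"
proof -
  have meas: "(\<lambda>x::real. x) \<in> borel_measurable borel" "(\<lambda>x::real. 1 - x) \<in> borel_measurable borel"
    "(\<lambda>x::real. x - w) \<in> borel_measurable borel"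
    by simp_all
  have "integrable M (\<lambda>s. \<alpha> s * \<beta> s * (X1 s - w))"
    "expectation (\<lambda>s. \<alpha> s * \<beta> s * (X1 s - w)) =
      expectation \<alpha> * expectation \<beta> * (expectation X1 - w)"
    using indep_vars_lebesgue_integral_mult3[OF indep _ _ meas(1,1,3), of 0 1 3] integrable
    by (simp_all add: prob_space)
  moreover have "integrable M (\<lambda>s. (1 - \<alpha> s) * \<gamma> s * (X2 s - w))"
    "expectation (\<lambda>s. (1 - \<alpha> s) * \<gamma> s * (X2 s - w)) =
      (1 - expectation \<alpha>) * expectation \<gamma> * (expectation X2 - w)"
    using indep_vars_lebesgue_integral_mult3[OF indep _ _ meas(2,1,3), of 0 2 4] integrable
    by (simp_all add: prob_space)
  ultimately show ?thesis
    by (simp add: udp_step_eq prob_space)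
qed

theorem theorem1:
  fixes M :: "'s measure"
    and \<alpha> \<beta> \<gamma> X1 X2 :: "'s \<Rightarrow> real"
    and \<mu>1 \<mu>2 \<eta> w :: real
  assumes "prob_space M"
    and sep: "\<exists>c. (AE s in M. X1 s < c) \<and> (AE s in M. c < X2 s)"
    and X1: "integrable M X1" "prob_space.expectation M X1 = \<mu>1"
    and X2: "integrable M X2" "prob_space.expectation M X2 = \<mu>2"
    and "\<mu>1 < \<mu>2"
    and eta: "0 < \<eta>" "\<eta> < 1"
    and alpha: "distributed M lborel \<alpha> (\<lambda>x. indicator {0<..<1} x)"
    and beta: "\<beta> \<in> borel_measurable M" "AE s in M. 0 < \<beta> s \<and> \<beta> s < 1"
              "prob_space.expectation M \<beta> = 1/2"
    and gamma: "\<gamma> \<in> borel_measurable M" "AE s in M. 0 < \<gamma> s \<and> \<gamma> s < 1"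
              "prob_space.expectation M \<gamma> = 1/2"
    and indep: "prob_space.indep_vars M (\<lambda>_. borel) (\<lambda>i. [\<alpha>, \<beta>, \<gamma>, X1, X2] ! i) {0..<5}"
  shows "prob_space.expectation M (\<lambda>s. udp_step w \<eta> (\<alpha> s) (\<beta> s) (\<gamma> s) (X1 s) (X2 s))
           \<in> closed_segment w ((\<mu>1 + \<mu>2) / 2)"
proof -
  interpret prob_space M by fact
  have "integrable M \<alpha>" and E\<alpha>: "expectation \<alpha> = 1/2"
    using uniform_unit_interval_distributed[OF alpha] by auto
  moreover have "integrable M \<beta>" "integrable M \<gamma>"
    using beta gamma by (auto intro!: integrable_const_bound[where B=1] elim: eventually_mono)
  ultimately have "expectation (\<lambda>s. udp_step w \<eta> (\<alpha> s) (\<beta> s) (\<gamma> s) (X1 s) (X2 s))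
      = w + \<eta> * (1/2 * (1/2) * (\<mu>1 - w) + (1 - 1/2) * (1/2) * (\<mu>2 - w))"
    using X1 X2 by (simp only: expectation_udp_step[OF indep] E\<alpha> beta(3) gamma(3))
  also have "\<dots> = (1 - \<eta>/2) *\<^sub>R w + (\<eta>/2) *\<^sub>R ((\<mu>1 + \<mu>2) / 2)"
    by (simp add: field_simps)
  finally show ?thesis
    using eta unfolding in_segment by (intro conjI exI[of _ "\<eta>/2"]) auto
qed

end
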